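(* Let $\{\mathcal B_n\}_{n\in\omega}$ be an entwined family and $\mathcal H_n:=\mathbb H[\mathcal B_{n-1}]_n$ for $n\ge1$. Let $\sigma$ be an initial type. If either $n>\mathrm{order}(\sigma)$, or $n=\mathrm{order}(\sigma)$ and $\sigma$ is inactive, then $\mathcal H_n[\sigma]$ is a finite set.
   Context: Standing assumptions. $\Sigma_{\mathrm{bg}}$ is a first-order signature with a distinguished sort $W$ and a binary relation symbol $\le$ on $W$. All other sorts are written $S$ and are interpreted by a fixed structure $\mathcal A$ as finite sets. $\le$ is interpreted in $\mathcal A$ as a total order. $\Sigma_{\mathrm{fg}}$ is a finite set of higher-order predicate symbols, disjoint from $\Sigma_{\mathrm{bg}}$, each of initial type. $l:=\max\{\mathrm{order}(\rho)\mid X:\rho\in\Sigma_{\mathrm{fg}}\}$. For $i\ge1$, $\Sigma_i\subseteq\Sigma_{\mathrm{fg}}$ consists of the symbols whose type has order at most $i$. Types. Relational types are $\rho::=o\mid\sigma\to\rho$ and argument types are $\sigma::=S\mid W\mid\rho$. The order is given by $\mathrm{order}(S)=\mathrm{order}(W)=\mathrm{order}(o)=0$ and $\mathrm{order}(\sigma\to\tau)=\max(\mathrm{order}(\sigma)+1,\mathrm{order}(\tau))$. Initial types. A type $\sigma_1\to\cdots\to\sigma_n\to o$ is initial if: (O1) at most one $\sigma_j$ is $W$; (O2) if $\sigma_j=W$, then $\mathrm{order}(\sigma_i)<\mathrm{order}(\sigma_j\to\cdots\to\sigma_n\to o)$ for all $i<j$; (O3) each $\sigma_j$ is $S$, $W$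 or initial. It is active if some $\sigma_i=W$, and inactive otherwise. Active types are written $\xi$ and inactive ones $\nu$. Frames and structures. A frame $\mathcal H$ assigns to each type a set: $\mathcal H[S]=\mathcal A[S]$, $\mathcal H[W]=\mathcal A[W]$, $\mathcal H[o]=\mathbb B=\{0,1\}$, and $\mathcal H[\sigma_1\to\sigma_2]\subseteq[\mathcal H[\sigma_1]\to\mathcal H[\sigma_2]]$, where $[A\to B]$ is the set of all functions. $\mathcal S$ is the standard frame, using full function spaces. For $\Xi\subseteq\Sigma_{\mathrm{fg}}$, a $(\Xi,\mathcal H)$-structure $\mathcal B$ extends $\mathcal A$ by an element $X^{\mathcal B}\in\mathcal H[\rho]$ for each $X:\rho\in\Xi$. A $(\Xi_2,\mathcal H_2)$-structure $\mathcal B_2$ is an expansion of a $(\Xi_1,\mathcal H_1)$-structure $\mathcal B_1$ (with $\Xi_1\subseteq\Xi_2$) if $c^{\mathcal B_2}=c^{\mathcal B_1}$ for all $c\in\Xi_1$. Ordering on relations. $\le_o$ on $[U_n\to\cdots\to U_1\to\mathbb B]$ is defined by: $f\le_o g$ iff ($f=0$ or $g=1$) when $n=0$, and iff $f(x)\le_o g(x)$ for all $x$ otherwise. $\top$ is the constantly-$1$ relation. Entwined frame. For $n\ge1$ and a $(\Xi,\mathcal H)$-structure $\mathcal B$, $\mathbb H[\mathcal B]_n$ is defined by cases on $\sigma$: (i) If $\sigma$ is initial with $\mathrm{order}(\sigma)\le n-2$, or $\sigma$ is inactive, $S$, $W$ or $o$ with $\mathrm{order}(\sigma)\le n-1$: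 $\mathbb H[\mathcal B]_n[\sigma]:=\mathcal H[\sigma]$. (ii) If $\sigma$ is active with $\mathrm{order}(\sigma)=n-1$: $\mathbb H[\mathcal B]_n[W\to\nu]:=\{\top\}\cup\{X^{\mathcal B}\,\overline s\mid X:\overline\tau\to W\to\nu\in\Xi,\ s_i\in\mathcal H[\tau_i]\}$, and $\mathbb H[\mathcal B]_n[\sigma_1\to\xi]:=[\mathbb H[\mathcal B]_n[\sigma_1]\to\mathbb H[\mathcal B]_n[\xi]]$. (iii) If $\sigma$ is initial with $\mathrm{order}(\sigma)=n$: $\mathbb H[\mathcal B]_n[W\to\nu]:=\{f\in[\mathcal A[W]\to\mathbb H[\mathcal B]_n[\nu]]\mid\forall z\le^{\mathcal A}z'.\ f(z)\le_o f(z')\}$, and $\mathbb H[\mathcal B]_n[\sigma_1\to\sigma_2]:=[\mathbb H[\mathcal B]_n[\sigma_1]\to\mathbb H[\mathcal B]_n[\sigma_2]]$ for $\sigma_1\ne W$. (iv) Otherwise (non-initial, or order $>n$): full function space $[\mathbb H[\mathcal B]_n[\sigma_1]\to\mathbb H[\mathcal B]_n[\sigma_2]]$. Entwined family. $\{\mathcal B_n\}_{n\in\omega}$ is entwined if $\mathcal B_0$ is the unique $(\emptyset,\mathcal S)$-structure and each $\mathcal B_{n+1}$ is a $(\Sigma_{n+1},\mathbb H[\mathcal B_n]_{n+1})$-expansion of $\mathcal B_n$. An entwined structure is a member of some entwined family. *)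

theory Defs
  imports Main
begin

text \<open>Syntactic types over a type of sort names 's (the sorts S); TW is the
distinguished sort W, TO the type o of truth values.\<close>

datatype 's ty = TS 's | TW | TO | Arr "'s ty" "'s ty"

fun order :: "'s ty \<Rightarrow> nat" where
  "order (Arr a b) = max (order a + 1) (order b)"
| "order _ = 0"

text \<open>Nesting depth of arrows (only used to bound the size of the value universe).\<close>
fun depth :: "'s ty \<Rightarrow> nat" where
  "depth (Arr a b) = max (depth a) (depth b) + 1"
| "depth _ = 0"

fun args :: "'s ty \<Rightarrow> 's ty list" where
  "args (Arr a b) = a # args b"
| "args _ = []"

fun res :: "'s ty \<Rightarrow> 's ty" where
  "res (Arr a b) = res b"
| "res t = t"

lemma args_size: "x \<in> set (args t) \<Longrightarrow> size x < size t"
  by (induction t) auto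

definition O1 :: "'s ty list \<Rightarrow> bool" where
  "O1 xs = (length (filter (\<lambda>x. x = TW) xs) \<le> 1)"

definition O2 :: "'s ty list \<Rightarrow> bool" where
  "O2 xs = (\<forall>j<length xs. xs ! j = TW \<longrightarrow>
              (\<forall>i<j. order (xs ! i) < order (foldr Arr (drop j xs) TO)))"

function initial :: "'s ty \<Rightarrow> bool" where
  "initial t = (res t = TO \<and> O1 (args t) \<and> O2 (args t) \<and>
     (\<forall>x\<in>set (args t). (\<exists>s. x = TS s) \<or> x = TW \<or> initial x))"
  by pat_completeness auto
termination by (relation "measure size") (auto dest: args_size)

declare initial.simps [simp del]

definition active :: "'s ty \<Rightarrow> bool" where
  "active t = (initial t \<and> TW \<in> set (args t))"

definition inactive :: "'s ty \<Rightarrow> bool" where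
  "inactive t = (initial t \<and> TW \<notin> set (args t))"

text \<open>Values of all types live in one universe 'v; functional values are
elements v acting through bg_app v. A function with domain A is represented
by the (unique, by injectivity of bg_app) v with bg_app v x = bg_dflt off A.\<close>

record ('s, 'v) bgs =
  bg_S :: "'s \<Rightarrow> 'v set"
  bg_W :: "'v set"
  bg_le :: "'v \<Rightarrow> 'v \<Rightarrow> bool"
  bg_tt :: 'v
  bg_ff :: 'v
  bg_app :: "'v \<Rightarrow> 'v \<Rightarrow> 'v"
  bg_dflt :: 'v

definition fun_space :: "('s, 'v) bgs \<Rightarrow> 'v set \<Rightarrow> 'v set \<Rightarrow> 'v set" where
  "fun_space bg A B = {v. (\<forall>x\<in>A. bg_app bg v x \<in> B) \<and>
                          (\<forall>x. x \<notin> A \<longrightarrow> bg_app bg v x = bg_dflt bg)}"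

text \<open>Ordering <=_o on relations with domains U_n, ..., U_1 (listed outermost first).\<close>
fun le_rel :: "('s, 'v) bgs \<Rightarrow> 'v set list \<Rightarrow> 'v \<Rightarrow> 'v \<Rightarrow> bool" where
  "le_rel bg [] f g = (f = bg_ff bg \<or> g = bg_tt bg)"
| "le_rel bg (D # Ds) f g = (\<forall>x\<in>D. le_rel bg Ds (bg_app bg f x) (bg_app bg g x))"

fun top_rel :: "('s, 'v) bgs \<Rightarrow> 'v set list \<Rightarrow> 'v" where
  "top_rel bg [] = bg_tt bg"
| "top_rel bg (D # Ds) = (THE v. \<forall>x. bg_app bg v x = (if x \<in> D then top_rel bg Ds else bg_dflt bg))"

fun Std :: "('s, 'v) bgs \<Rightarrow> 's ty \<Rightarrow> 'v set" where
  "Std bg (TS s) = bg_S bg s"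
| "Std bg TW = bg_W bg"
| "Std bg TO = {bg_tt bg, bg_ff bg}"
| "Std bg (Arr a b) = fun_space bg (Std bg a) (Std bg b)"

definition bg_ok :: "('s, 'v) bgs \<Rightarrow> bool" where
  "bg_ok bg = ((\<forall>s. finite (bg_S bg s)) \<and>
     (\<forall>x\<in>bg_W bg. bg_le bg x x) \<and>
     (\<forall>x\<in>bg_W bg. \<forall>y\<in>bg_W bg. bg_le bg x y \<and> bg_le bg y x \<longrightarrow> x = y) \<and>
     (\<forall>x\<in>bg_W bg. \<forall>y\<in>bg_W bg. \<forall>z\<in>bg_W bg. bg_le bg x y \<and> bg_le bg y z \<longrightarrow> bg_le bg x z) \<and>
     (\<forall>x\<in>bg_W bg. \<forall>y\<in>bg_W bg. bg_le bg x y \<or> bg_le bg y x) \<and>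
     bg_tt bg \<noteq> bg_ff bg \<and>
     inj (bg_app bg))"

fun ulev :: "('s, 'v) bgs \<Rightarrow> nat \<Rightarrow> 'v set" where
  "ulev bg 0 = (\<Union>s. bg_S bg s) \<union> bg_W bg \<union> {bg_tt bg, bg_ff bg}"
| "ulev bg (Suc k) = ulev bg k \<union> \<Union>{fun_space bg A (ulev bg k) | A. A \<subseteq> ulev bg k}"

definition full_upto :: "('s, 'v) bgs \<Rightarrow> nat \<Rightarrow> bool" where
  "full_upto bg D = (\<forall>k<D. \<forall>A \<subseteq> ulev bg k. \<forall>f.
      (\<forall>x\<in>A. f x \<in> ulev bg k) \<and> (\<forall>x. x \<notin> A \<longrightarrow> f x = bg_dflt bg)
      \<longrightarrow> (\<exists>v. bg_app bg v = f))"

text \<open>EF bg ty n H Xi I sigma = H[B]_n[sigma] where B is the (Xi,H)-structure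
interpreting X in Xi by I X; ty gives the types of foreground symbols.\<close>

function EF :: "('s, 'v) bgs \<Rightarrow> ('x \<Rightarrow> 's ty) \<Rightarrow> nat \<Rightarrow> ('s ty \<Rightarrow> 'v set) \<Rightarrow> 'x set
                 \<Rightarrow> ('x \<Rightarrow> 'v) \<Rightarrow> 's ty \<Rightarrow> 'v set" where
  "EF bg ty n H Xi I \<sigma> =
    (if (initial \<sigma> \<and> order \<sigma> + 2 \<le> n) \<or>
        ((inactive \<sigma> \<or> (\<exists>s. \<sigma> = TS s) \<or> \<sigma> = TW \<or> \<sigma> = TO) \<and> order \<sigma> + 1 \<le> n)
     then H \<sigma>
     else if active \<sigma> \<and> order \<sigma> + 1 = n then
       (case \<sigma> of
          Arr a b \<Rightarrow>
            (if a = TW then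
               {top_rel bg (map H (args \<sigma>))} \<union>
               {foldl (bg_app bg) (I X) ss | X ss. X \<in> Xi \<and>
                  (\<exists>\<tau>s. ty X = foldr Arr \<tau>s \<sigma> \<and> list_all2 (\<lambda>s \<tau>. s \<in> H \<tau>) ss \<tau>s)}
             else fun_space bg (EF bg ty n H Xi I a) (EF bg ty n H Xi I b))
        | _ \<Rightarrow> {})
     else if initial \<sigma> \<and> order \<sigma> = n then
       (case \<sigma> of
          Arr a b \<Rightarrow>
            (if a = TW then
               {f \<in> fun_space bg (bg_W bg) (EF bg ty n H Xi I b).
                  \<forall>z z'. z \<in> bg_W bg \<longrightarrow> z' \<in> bg_W bg \<longrightarrow> bg_le bg z z' \<longrightarrow>
                    le_rel bg (map (EF bg ty n H Xi I) (args b)) (bg_app bg f z) (bg_app bg f z')}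
             else fun_space bg (EF bg ty n H Xi I a) (EF bg ty n H Xi I b))
        | _ \<Rightarrow> {})
     else
       (case \<sigma> of
          Arr a b \<Rightarrow> fun_space bg (EF bg ty n H Xi I a) (EF bg ty n H Xi I b)
        | _ \<Rightarrow> H \<sigma>))"
  by pat_completeness auto
termination
  by (relation "measure (\<lambda>(bg, ty, n, H, Xi, I, \<sigma>). size \<sigma>)")
     (auto dest: args_size)

declare EF.simps [simp del]

text \<open>Sigma_n (Sigma_0 = {} is the symbol set of B_0).\<close>
definition SigN :: "'x set \<Rightarrow> ('x \<Rightarrow> 's ty) \<Rightarrow> nat \<Rightarrow> 'x set" where
  "SigN Sig ty n = (if n = 0 then {} else {X \<in> Sig. order (ty X) \<le> n})"

text \<open>Frame of B_n for a family given by interpretations I n: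
 frame of B_0 is S, frame of B_(n+1) is H[B_n]_(n+1).\<close>
fun Fr :: "('s, 'v) bgs \<Rightarrow> 'x set \<Rightarrow> ('x \<Rightarrow> 's ty) \<Rightarrow> (nat \<Rightarrow> 'x \<Rightarrow> 'v) \<Rightarrow> nat \<Rightarrow> 's ty \<Rightarrow> 'v set" where
  "Fr bg Sig ty I 0 = Std bg"
| "Fr bg Sig ty I (Suc n) = EF bg ty (Suc n) (Fr bg Sig ty I n) (SigN Sig ty n) (I n)"

definition entwined :: "('s, 'v) bgs \<Rightarrow> 'x set \<Rightarrow> ('x \<Rightarrow> 's ty) \<Rightarrow> (nat \<Rightarrow> 'x \<Rightarrow> 'v) \<Rightarrow> bool" where
  "entwined bg Sig ty I = (\<forall>n.
     (\<forall>X\<in>SigN Sig ty (Suc n). I (Suc n) X \<in> Fr bg Sig ty I (Suc n) (ty X)) \<and>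
     (\<forall>X\<in>SigN Sig ty n. I (Suc n) X = I n X))"

end

theory Submission
  imports Defs "HOL-Library.FuncSet"
begin

text \<open>Finiteness propagates up the entwined family level by level. At level n an initial type
  of order below n, or of order n and inactive, is interpreted either by the previous frame, by
  a function space between finite sets, or (active types W \<rightarrow> \<nu> of order n - 1) by the
  constant \<top> together with the partial applications X s1 ... sk of foreground symbols.
  Condition (O2) forces the arguments si to have types of order below n - 1, so they range
  over finite sets, and there are finitely many symbols.\<close>

lemma finite_fun_space:
  assumes "inj (bg_app bg)" "finite A" "finite B"
  shows "finite (fun_space bg A B)"
proof -
  have "inj_on (\<lambda>v. restrict (bg_app bg v) A) (fun_space bg A B)"
  proof (rule inj_onI)
    fix v w assume v: "v \<in> fun_space bg A B" and w: "w \<in> fun_space bg A B"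
      and eq: "restrict (bg_app bg v) A = restrict (bg_app bg w) A"
    have "bg_app bg v x = bg_app bg w x" for x
    proof (cases "x \<in> A")
      case True
      then show ?thesis using fun_cong[OF eq, of x] by simp
    next
      case False
      then show ?thesis using v w by (simp add: fun_space_def)
    qed
    then show "v = w" using assms(1) by (meson injD ext)
  qed
  moreover have "(\<lambda>v. restrict (bg_app bg v) A) ` fun_space bg A B \<subseteq> A \<rightarrow>\<^sub>E B"
    by (auto simp: fun_space_def)
  moreover have "finite (A \<rightarrow>\<^sub>E B)" using assms by (simp add: finite_PiE)
  ultimately show ?thesis by (metis finite_imageD finite_subset)
qed

lemma args_foldr_Arr: "args (foldr Arr ts t) = ts @ args t"
  by (induction ts) auto

lemma res_foldr_Arr: "res (foldr Arr ts t) = res t"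
  by (induction ts) auto

lemma foldr_Arr_args_res: "foldr Arr (args t) (res t) = t"
  by (induction t) auto

lemma not_initial_TS [simp]: "\<not> initial (TS s)"
  and not_initial_TW [simp]: "\<not> initial TW"
  by (subst initial.simps, simp)+

lemma initial_order_0: "initial \<sigma> \<Longrightarrow> order \<sigma> = 0 \<Longrightarrow> \<sigma> = TO"
  by (cases \<sigma>) auto

lemma initial_ArrD:
  assumes "initial (Arr a b)"
  shows "initial b" and "(\<exists>s. a = TS s) \<or> a = TW \<or> initial a"
proof -
  have h: "res b = TO" "O1 (a # args b)" "O2 (a # args b)"
    "\<forall>x\<in>set (a # args b). (\<exists>s. x = TS s) \<or> x = TW \<or> initial x"
    using assms initial.simps[of "Arr a b"] by auto
  have "O1 (args b)" using h(2) by (auto simp: O1_def split: if_splits)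
  moreover have "O2 (args b)"
    unfolding O2_def
  proof (intro allI impI)
    fix j i assume "j < length (args b)" "args b ! j = TW" "i < j"
    then have "order ((a # args b) ! Suc i) < order (foldr Arr (drop (Suc j) (a # args b)) TO)"
      using h(3) unfolding O2_def by (metis Suc_less_eq length_Cons nth_Cons_Suc)
    then show "order (args b ! i) < order (foldr Arr (drop j (args b)) TO)" by simp
  qed
  ultimately show "initial b" using h initial.simps[of b] by auto
  show "(\<exists>s. a = TS s) \<or> a = TW \<or> initial a" using h(4) by auto
qed

lemma inactive_ArrD: "inactive (Arr a b) \<Longrightarrow> a \<noteq> TW \<and> inactive b"
  by (auto simp: inactive_def dest: initial_ArrD)

text \<open>(O1) excludes a second W among the arguments before W, and (O2) bounds their order.\<close>

lemma initial_prefix_arg: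
  assumes ini: "initial (foldr Arr ts (Arr TW b))" and t: "t \<in> set ts"
  shows "(\<exists>s. t = TS s) \<or> (initial t \<and> order t < order (Arr TW b))"
proof -
  let ?xs = "ts @ TW # args b"
  have "res b = TO" and O1: "O1 ?xs" and O2: "O2 ?xs"
    and args_ok: "\<forall>x\<in>set ?xs. (\<exists>s. x = TS s) \<or> x = TW \<or> initial x"
    using ini initial.simps[of "foldr Arr ts (Arr TW b)"]
    by (simp_all add: args_foldr_Arr res_foldr_Arr)
  then have W_tail: "foldr Arr (drop (length ts) ?xs) TO = Arr TW b"
    using foldr_Arr_args_res[of b] by simp
  obtain i where i: "i < length ts" "ts ! i = t" using t by (meson in_set_conv_nth)
  have "?xs ! length ts = TW" "length ts < length ?xs" by simp_all
  then have "order (?xs ! i) < order (foldr Arr (drop (length ts) ?xs) TO)"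
    using O2 i(1) unfolding O2_def by blast
  then have "order t < order (Arr TW b)" using i W_tail by (simp add: nth_append)
  moreover have "t \<noteq> TW"
  proof
    assume "t = TW"
    then have "filter (\<lambda>x. x = TW) ts \<noteq> []" using t by (simp add: filter_empty_conv)
    then show False using O1 by (simp add: O1_def)
  qed
  ultimately show ?thesis using args_ok t by auto
qed

context
  fixes bg :: "('s, 'v) bgs" and ty :: "'x \<Rightarrow> 's ty" and n :: nat
    and H :: "'s ty \<Rightarrow> 'v set" and Xi :: "'x set" and I :: "'x \<Rightarrow> 'v"
begin

lemma EF_TS: "n \<ge> 1 \<Longrightarrow> EF bg ty n H Xi I (TS s) = H (TS s)"
  by (subst EF.simps) simp

lemma EF_TO: "n \<ge> 1 \<Longrightarrow> EF bg ty n H Xi I TO = H TO"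
  by (subst EF.simps) simp

lemma EF_previous:
  assumes "initial \<sigma>" "order \<sigma> + 2 \<le> n \<or> (inactive \<sigma> \<and> order \<sigma> + 1 \<le> n)"
  shows "EF bg ty n H Xi I \<sigma> = H \<sigma>"
  using assms by (subst EF.simps) auto

lemma EF_partial_applications:
  assumes "active (Arr TW b)" "order (Arr TW b) + 1 = n"
  shows "EF bg ty n H Xi I (Arr TW b) =
    {top_rel bg (map H (args (Arr TW b)))} \<union>
    {foldl (bg_app bg) (I X) ss | X ss. X \<in> Xi \<and>
       (\<exists>\<tau>s. ty X = foldr Arr \<tau>s (Arr TW b) \<and> list_all2 (\<lambda>s \<tau>. s \<in> H \<tau>) ss \<tau>s)}"
  using assms by (subst EF.simps) (auto simp: active_def inactive_def)

lemma EF_fun_space: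
  assumes "initial (Arr a b)" "a \<noteq> TW" "order (Arr a b) \<le> n"
    and "\<not> (order (Arr a b) + 2 \<le> n \<or> (inactive (Arr a b) \<and> order (Arr a b) + 1 \<le> n))"
  shows "EF bg ty n H Xi I (Arr a b) =
    fun_space bg (EF bg ty n H Xi I a) (EF bg ty n H Xi I b)"
  using assms by (subst EF.simps) (auto simp: active_def inactive_def)

end

definition finite_frame_upto :: "('s ty \<Rightarrow> 'v set) \<Rightarrow> nat \<Rightarrow> bool" where
  "finite_frame_upto H n \<longleftrightarrow> (\<forall>s. finite (H (TS s))) \<and>
     (\<forall>\<sigma>. initial \<sigma> \<and> (order \<sigma> < n \<or> (order \<sigma> = n \<and> inactive \<sigma>)) \<longrightarrow> finite (H \<sigma>))"

lemma finite_frame_upto_Std: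
  assumes "bg_ok bg"
  shows "finite_frame_upto (Std bg) 0"
proof -
  have "finite (bg_S bg s)" for s using assms by (simp add: bg_ok_def)
  then show ?thesis by (auto simp: finite_frame_upto_def dest: initial_order_0)
qed

lemma finite_argument_lists:
  assumes "initial (foldr Arr \<tau>s (Arr TW b))" "finite_frame_upto H (order (Arr TW b))"
  shows "finite {ss. list_all2 (\<lambda>s \<tau>. s \<in> H \<tau>) ss \<tau>s}"
proof (rule finite_subset)
  have "list_all2 (\<lambda>s \<tau>. s \<in> H \<tau>) ss \<tau>s \<longrightarrow>
      set ss \<subseteq> \<Union> (H ` set \<tau>s) \<and> length ss = length \<tau>s" for ss
    by (induction ss \<tau>s rule: list_induct2') auto
  then show "{ss. list_all2 (\<lambda>s \<tau>. s \<in> H \<tau>) ss \<tau>s}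
      \<subseteq> {ss. set ss \<subseteq> \<Union> (H ` set \<tau>s) \<and> length ss = length \<tau>s}"
    by (rule Collect_mono)
  have "finite (H \<tau>)" if "\<tau> \<in> set \<tau>s" for \<tau>
    using initial_prefix_arg[OF assms(1) that] assms(2) by (auto simp: finite_frame_upto_def)
  then show "finite {ss. set ss \<subseteq> \<Union> (H ` set \<tau>s) \<and> length ss = length \<tau>s}"
    by (intro finite_lists_length_eq) auto
qed

lemma finite_partial_applications:
  assumes "finite Xi" "\<forall>X\<in>Xi. initial (ty X)"
    and "finite_frame_upto H (order (Arr TW b))"
  shows "finite {foldl (bg_app bg) (I X) ss | X ss. X \<in> Xi \<and>
    (\<exists>\<tau>s. ty X = foldr Arr \<tau>s (Arr TW b) \<and> list_all2 (\<lambda>s \<tau>. s \<in> H \<tau>) ss \<tau>s)}"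
    (is "finite ?P")
proof -
  define prefixes where "prefixes X = {\<tau>s. ty X = foldr Arr \<tau>s (Arr TW b)}" for X
  have "finite (\<Union>X\<in>Xi. \<Union>\<tau>s\<in>prefixes X.
      foldl (bg_app bg) (I X) ` {ss. list_all2 (\<lambda>s \<tau>. s \<in> H \<tau>) ss \<tau>s})"
  proof (intro finite_UN_I finite_imageI)
    show "finite Xi" by (rule assms(1))
    show "finite (prefixes X)" for X
    proof (rule finite_subset)
      show "prefixes X \<subseteq> {\<tau>s. set \<tau>s \<subseteq> set (args (ty X)) \<and> length \<tau>s \<le> length (args (ty X))}"
        by (auto simp: prefixes_def args_foldr_Arr)
    qed (rule finite_lists_length_le, simp)
    show "finite {ss. list_all2 (\<lambda>s \<tau>. s \<in> H \<tau>) ss \<tau>s}"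
      if "X \<in> Xi" "\<tau>s \<in> prefixes X" for X \<tau>s
      using that assms by (intro finite_argument_lists) (auto simp: prefixes_def)
  qed
  then show ?thesis
    by (rule finite_subset[rotated]) (auto simp: prefixes_def)
qed

lemma finite_EF:
  assumes inj: "inj (bg_app bg)" and H: "finite_frame_upto H m"
    and Xi: "finite Xi" "\<forall>X\<in>Xi. initial (ty X)"
    and "initial \<sigma>" "order \<sigma> < Suc m \<or> (order \<sigma> = Suc m \<and> inactive \<sigma>)"
  shows "finite (EF bg ty (Suc m) H Xi I \<sigma>)"
  using assms(5,6)
proof (induction \<sigma>)
  case TO
  then have "finite (H TO)" using H by (auto simp: finite_frame_upto_def inactive_def)
  then show ?case by (simp add: EF_TO)
next
  case (Arr a b)
  let ?EF = "EF bg ty (Suc m) H Xi I"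
  let ?\<sigma> = "Arr a b"
  show ?case
  proof (cases "order ?\<sigma> + 2 \<le> Suc m \<or> (inactive ?\<sigma> \<and> order ?\<sigma> + 1 \<le> Suc m)")
    case True
    then have "order ?\<sigma> < m \<or> order ?\<sigma> = m \<and> inactive ?\<sigma>" by auto
    then have "finite (H ?\<sigma>)" using Arr.prems(1) H unfolding finite_frame_upto_def by blast
    then show ?thesis by (simp add: EF_previous[OF Arr.prems(1) True])
  next
    case not_previous: False
    show ?thesis
    proof (cases "a = TW")
      case True
      then have active: "active (Arr TW b)" and order: "order (Arr TW b) + 1 = Suc m"
        using Arr.prems not_previous by (auto simp: active_def inactive_def)
      then have "finite_frame_upto H (order (Arr TW b))" using H by simp
      from finite_partial_applications[OF Xi this] show ?thesis
        by (simp add: True EF_partial_applications[OF active order])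
    next
      case a_not_W: False
      have "finite (?EF a)"
        using initial_ArrD(2)[OF Arr.prems(1)]
      proof (elim disjE exE)
        assume "initial a"
        moreover have "order a < Suc m" using Arr.prems(2) by auto
        ultimately show ?thesis using Arr.IH(1) by blast
      qed (use a_not_W H in \<open>auto simp: EF_TS finite_frame_upto_def\<close>)
      moreover have "finite (?EF b)"
      proof (rule Arr.IH(2))
        show "initial b" using initial_ArrD(1)[OF Arr.prems(1)] .
        show "order b < Suc m \<or> order b = Suc m \<and> inactive b"
          using Arr.prems(2) inactive_ArrD[of a b] by auto
      qed
      moreover have "order ?\<sigma> \<le> Suc m" using Arr.prems(2) by auto
      ultimately show ?thesis
        by (simp add: EF_fun_space[OF Arr.prems(1) a_not_W _ not_previous] finite_fun_space[OF inj])
    qed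
  qed
qed simp_all

lemma finite_frame_upto_EF:
  assumes "inj (bg_app bg)" "finite_frame_upto H m" "finite Xi" "\<forall>X\<in>Xi. initial (ty X)"
  shows "finite_frame_upto (EF bg ty (Suc m) H Xi I) (Suc m)"
  using finite_EF[OF assms] assms(2) by (simp add: finite_frame_upto_def EF_TS)

lemma finite_frame_upto_Fr:
  assumes "bg_ok bg" "finite Sig" "\<forall>X\<in>Sig. initial (ty X)"
  shows "finite_frame_upto (Fr bg Sig ty I n) n"
proof (induction n)
  case 0
  then show ?case using finite_frame_upto_Std[OF assms(1)] by simp
next
  case (Suc m)
  have "inj (bg_app bg)" using assms(1) by (simp add: bg_ok_def)
  moreover have "finite (SigN Sig ty m)" "\<forall>X\<in>SigN Sig ty m. initial (ty X)"
    using assms(2,3) by (auto simp: SigN_def)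
  ultimately show ?case using Suc finite_frame_upto_EF by simp
qed

text \<open>Finiteness holds for every choice of interpretations.\<close>

theorem mainTheorem2:
  fixes bg :: "('s, 'v) bgs" and Sig :: "'x set" and ty :: "'x \<Rightarrow> 's ty"
    and I :: "nat \<Rightarrow> 'x \<Rightarrow> 'v" and \<sigma> :: "'s ty" and n :: nat
  assumes "bg_ok bg"
    and "full_upto bg (max (depth \<sigma>) (Max (insert 0 (depth ` ty ` Sig))))"
    and "finite Sig"
    and "\<forall>X\<in>Sig. initial (ty X)"
    and "entwined bg Sig ty I"
    and "initial \<sigma>"
    and "n \<ge> 1"
    and "n > order \<sigma> \<or> (n = order \<sigma> \<and> inactive \<sigma>)"
  shows "finite (Fr bg Sig ty I n \<sigma>)"
  using finite_frame_upto_Fr[OF assms(1,3,4), of I n] assms(6,8)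
  by (auto simp: finite_frame_upto_def)

end
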